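(* Consider the spectrum-oligopoly game described in the context on a mean valid conflict graph characterized by $I_1,\dots,I_d$. Suppose a symmetric Nash equilibrium exists in which, for each state $j\in\{1,\dots,n\}$, each primary selects only independent sets among $I_1,\dots,I_d$, choosing $I_s$ with probability $t_{s,j}$ ($\sum_st_{s,j}=1$). For each $s$, define $\gamma_{s,j}=\sum_{k=j}^nt_{s,k}q_k$ ($\gamma_{s,n+1}=0$), $U_{s,1}=v$ and recursively $p_{s,j}=c+(f_j(U_{s,j})-c)W(\gamma_{s,j})$, $L_{s,j}=g_j\!\left(\frac{p_{s,j}-c}{W(\gamma_{s,j+1})}+c\right)$, $U_{s,j+1}=L_{s,j}$. If $t_{s,j}>0$ and $t_{r,j}>0$, then $U_{s,j}=U_{r,j}$.
   Context: Model. $l$ primaries; $m$ secondaries at each node of a finite conflict graph $G=(V,E)$, integers $1\le m<l$. Each primary's channel state $j\in\{0,\dots,n\}$ is the same at every node; states independent across primaries, equal to $j$ w.p. $q_j$, $\sum_{j\ge1}q_j<1$; state 0 means unsellable. Constants $c$, $v$. For $j=1..n$, $g_j$ continuous strictly increasing, $g_i(p)<g_j(p)$ for $i>j$, $f_j=g_j^{-1}$, and for $i<j$, $x>y>g_i(c)$: $\frac{f_i(y)-c}{f_j(y)-c}<\frac{f_i(x)-c}{f_j(x)-c}$; and $f_1(v)>c$. In state $j\ge1$ a primary (knowing only its own state) chooses, possibly randomly, an independent set of $G$ and a penalty at each of its nodes. At each node the $\min(Y,m)$ lowest-penalty offers among the $Y$ offers with penalty $\le v$ are sold (ties uniformly random);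 a sale at penalty $x$ in state $j$ earns $f_j(x)-c$, else 0; payoff sums over nodes. Nash equilibrium: no primary in any state can gain by unilateral deviation; symmetric if all use the same strategy. $w(x)=\sum_{i=m}^{l-1}\binom{l-1}{i}x^i(1-x)^{l-1-i}$, $W=1-w$. Mean valid graph: $V=I_1\sqcup\dots\sqcup I_d$, $d\ge2$, maximal independent sets, $M_s=|I_s|$, $M_1\ge\dots\ge M_d$, and every independent set $I$ has $\sum_s|I\cap I_s|/M_s\le1$. *)

theory Defs
  imports "HOL-Probability.Probability"
begin

definition indep :: "('v \<Rightarrow> 'v \<Rightarrow> bool) \<Rightarrow> 'v set \<Rightarrow> bool" where
  "indep E I \<longleftrightarrow> (\<forall>a\<in>I. \<forall>b\<in>I. \<not> E a b)"

definition maximal_indep :: "('v \<Rightarrow> 'v \<Rightarrow> bool) \<Rightarrow> 'v set \<Rightarrow> bool" where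
  "maximal_indep E I \<longleftrightarrow> indep E I \<and> (\<forall>w. w \<notin> I \<longrightarrow> \<not> indep E (insert w I))"

definition mean_valid :: "('v::finite \<Rightarrow> 'v \<Rightarrow> bool) \<Rightarrow> nat \<Rightarrow> (nat \<Rightarrow> 'v set) \<Rightarrow> bool" where
  "mean_valid E d Iset \<longleftrightarrow>
     d \<ge> 2
   \<and> (\<Union>s\<in>{1..d}. Iset s) = UNIV
   \<and> (\<forall>s\<in>{1..d}. \<forall>r\<in>{1..d}. s \<noteq> r \<longrightarrow> Iset s \<inter> Iset r = {})
   \<and> (\<forall>s\<in>{1..d}. maximal_indep E (Iset s))
   \<and> (\<forall>s\<in>{1..d}. \<forall>r\<in>{1..d}. s \<le> r \<longrightarrow> card (Iset r) \<le> card (Iset s))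
   \<and> (\<forall>I. indep E I \<longrightarrow> (\<Sum>s=1..d. real (card (I \<inter> Iset s)) / real (card (Iset s))) \<le> 1)"

definition wfun :: "nat \<Rightarrow> nat \<Rightarrow> real \<Rightarrow> real" where
  "wfun l m x = (\<Sum>i=m..l-1. real ((l-1) choose i) * x ^ i * (1 - x) ^ (l - 1 - i))"

definition Wfun :: "nat \<Rightarrow> nat \<Rightarrow> real \<Rightarrow> real" where
  "Wfun l m x = 1 - wfun l m x"

text \<open>An action of a primary: an independent set together with a penalty at every node
  (only the penalties at nodes of the chosen set matter).  A (mixed) strategy in a state is a
  probability measure on this action space.\<close>
definition actM :: "('v set \<times> ('v \<Rightarrow> real)) measure" where
  "actM = count_space UNIV \<Otimes>\<^sub>M (\<Pi>\<^sub>M i\<in>UNIV. (borel :: real measure))"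

text \<open>Probability that one given other primary (whose state is random with law q and who plays
  the symmetric strategy sigma) makes an offer at node i with penalty below x (resp. equal to x)
  and at most v.  State 0 yields no offer.\<close>
definition lowprob :: "nat \<Rightarrow> (nat \<Rightarrow> real) \<Rightarrow> real \<Rightarrow> (nat \<Rightarrow> ('v set \<times> ('v \<Rightarrow> real)) measure)
    \<Rightarrow> 'v \<Rightarrow> real \<Rightarrow> real" where
  "lowprob n q v \<sigma> i x = (\<Sum>k=1..n. q k * measure (\<sigma> k) {a. i \<in> fst a \<and> snd a i < x \<and> snd a i \<le> v})"

definition eqprob :: "nat \<Rightarrow> (nat \<Rightarrow> real) \<Rightarrow> real \<Rightarrow> (nat \<Rightarrow> ('v set \<times> ('v \<Rightarrow> real)) measure)
    \<Rightarrow> 'v \<Rightarrow> real \<Rightarrow> real" where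
  "eqprob n q v \<sigma> i x = (\<Sum>k=1..n. q k * measure (\<sigma> k) {a. i \<in> fst a \<and> snd a i = x \<and> snd a i \<le> v})"

text \<open>Probability that our offer is sold when A other offers have strictly lower penalty and B
  other offers have the same penalty (m lowest are sold, ties broken uniformly at random).\<close>
definition sold :: "nat \<Rightarrow> nat \<Rightarrow> nat \<Rightarrow> real" where
  "sold m A B = (if m \<le> A then 0 else if A + B < m then 1 else real (m - A) / real (B + 1))"

text \<open>Sale probability when each of the l-1 other primaries independently has probability a of an
  offer with lower penalty and b of an offer with equal penalty (multinomial law of (A,B)).\<close>
definition sale_prob :: "nat \<Rightarrow> nat \<Rightarrow> real \<Rightarrow> real \<Rightarrow> real" where
  "sale_prob l m a b =
     (\<Sum>A\<le>l-1. \<Sum>B\<le>l-1-A. real ((l-1) choose A) * real ((l-1-A) choose B)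
        * a ^ A * b ^ B * (1 - a - b) ^ (l - 1 - A - B) * sold m A B)"

text \<open>Expected payoff of a primary in state j playing the pure action (I,x) while the other
  l-1 primaries use the symmetric strategy sigma; f j is the inverse of g j.\<close>
definition payoff :: "nat \<Rightarrow> nat \<Rightarrow> nat \<Rightarrow> (nat \<Rightarrow> real) \<Rightarrow> real \<Rightarrow> real \<Rightarrow> (nat \<Rightarrow> real \<Rightarrow> real)
    \<Rightarrow> (nat \<Rightarrow> ('v set \<times> ('v \<Rightarrow> real)) measure) \<Rightarrow> nat \<Rightarrow> 'v set \<times> ('v \<Rightarrow> real) \<Rightarrow> real" where
  "payoff l m n q c v g \<sigma> j a =
     (\<Sum>i\<in>fst a. if snd a i \<le> v
        then (inv (g j) (snd a i) - c) * sale_prob l m (lowprob n q v \<sigma> i (snd a i)) (eqprob n q v \<sigma> i (snd a i))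
        else 0)"

text \<open>Symmetric Nash equilibrium: sigma j is the (mixed) strategy in state j; it is a probability
  measure on actions, a.s. choosing independent sets, with well-defined expected payoff, and no
  deviation to any independent set / penalty vector (hence to any mixture) is profitable.\<close>
definition symNE :: "nat \<Rightarrow> nat \<Rightarrow> nat \<Rightarrow> (nat \<Rightarrow> real) \<Rightarrow> real \<Rightarrow> real \<Rightarrow> (nat \<Rightarrow> real \<Rightarrow> real)
    \<Rightarrow> ('v \<Rightarrow> 'v \<Rightarrow> bool) \<Rightarrow> (nat \<Rightarrow> ('v set \<times> ('v \<Rightarrow> real)) measure) \<Rightarrow> bool" where
  "symNE l m n q c v g E \<sigma> \<longleftrightarrow>
     (\<forall>j\<in>{1..n}.
        prob_space (\<sigma> j) \<and> sets (\<sigma> j) = sets actM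
      \<and> (AE a in \<sigma> j. indep E (fst a))
      \<and> integrable (\<sigma> j) (payoff l m n q c v g \<sigma> j)
      \<and> (\<forall>I x. indep E I \<longrightarrow>
           payoff l m n q c v g \<sigma> j (I, x) \<le> (\<integral>a. payoff l m n q c v g \<sigma> j a \<partial>\<sigma> j)))"

definition gam :: "nat \<Rightarrow> (nat \<Rightarrow> real) \<Rightarrow> (nat \<Rightarrow> nat \<Rightarrow> real) \<Rightarrow> nat \<Rightarrow> nat \<Rightarrow> real" where
  "gam n q t s j = (\<Sum>k=j..n. t s k * q k)"

text \<open>Urec ... s k = U_{s,k+1}; U_{s,1} = v and U_{s,j+1} = L_{s,j}.\<close>
primrec Urec :: "nat \<Rightarrow> nat \<Rightarrow> nat \<Rightarrow> (nat \<Rightarrow> real) \<Rightarrow> real \<Rightarrow> real \<Rightarrow> (nat \<Rightarrow> real \<Rightarrow> real)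
    \<Rightarrow> (nat \<Rightarrow> nat \<Rightarrow> real) \<Rightarrow> nat \<Rightarrow> nat \<Rightarrow> real" where
  "Urec l m n q c v g t s 0 = v"
| "Urec l m n q c v g t s (Suc k) =
     (let j = Suc k;
          p = c + (inv (g j) (Urec l m n q c v g t s k) - c) * Wfun l m (gam n q t s j)
      in g j ((p - c) / Wfun l m (gam n q t s (j + 1)) + c))"

definition Uval :: "nat \<Rightarrow> nat \<Rightarrow> nat \<Rightarrow> (nat \<Rightarrow> real) \<Rightarrow> real \<Rightarrow> real \<Rightarrow> (nat \<Rightarrow> real \<Rightarrow> real)
    \<Rightarrow> (nat \<Rightarrow> nat \<Rightarrow> real) \<Rightarrow> nat \<Rightarrow> nat \<Rightarrow> real" where
  "Uval l m n q c v g t s j = Urec l m n q c v g t s (j - 1)"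

end

theory Submission
  imports Defs
begin

text \<open>At the equilibrium every primary offers, at each node of the set it uses, only penalties
  maximising the expected node payoff \<open>(f\<^sub>k x - c) \<cdot> sale probability\<close>, since the
  sets \<open>I\<^sub>s\<close> used with positive probability all attain the equilibrium value.  Undercutting an
  atom of the penalty distribution would gain a whole tie, so there are no atoms and the node
  payoff becomes \<open>(f\<^sub>k x - c) W(F(x))\<close> with \<open>F\<close> continuous.  The ratio condition is a
  single-crossing property: best offers in a higher state lie below those of a lower state.  By
  induction on the state, \<open>U\<^sub>s\<^sub>,\<^sub>k\<close> is then the top of the best offers at every node of
  \<open>I\<^sub>s\<close>, with \<open>F(U\<^sub>s\<^sub>,\<^sub>k) = \<gamma>\<^sub>s\<^sub>,\<^sub>k\<close>; the recursion defining \<open>U\<close> is just indifference between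
  the top and the bottom best offer.  Finally, if \<open>U\<^sub>r\<^sub>,\<^sub>j < U\<^sub>s\<^sub>,\<^sub>j\<close>, an offer at \<open>U\<^sub>s\<^sub>,\<^sub>j\<close> on a
  node of \<open>I\<^sub>r\<close> meets no more competition than one at \<open>U\<^sub>r\<^sub>,\<^sub>j\<close> (single crossing again,
  comparing with the values of \<open>I\<^sub>s\<close>), hence pays strictly more than the node value: a
  contradiction, and symmetrically.\<close>

lemma measurable_pred_mem_fst[measurable]:
  "Measurable.pred (count_space UNIV \<Otimes>\<^sub>M M) (\<lambda>a. i \<in> fst a)"
  by (rule measurable_compose[OF measurable_fst, where g="\<lambda>X. i \<in> X"]) simp

lemma measurable_pred_fst_eq[measurable]:
  "Measurable.pred (count_space UNIV \<Otimes>\<^sub>M M) (\<lambda>a. fst a = I)"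
  by (rule measurable_compose[OF measurable_fst, where g="\<lambda>X. X = I"]) simp

lemma space_actM: "space actM = UNIV"
  unfolding actM_def by (simp add: space_pair_measure space_PiM)

text \<open>The penalty offered at node \<open>i\<close>; an action without an offer at \<open>i\<close> is encoded by the
  penalty \<open>v + 1\<close>, which never sells.\<close>
definition offer :: "real \<Rightarrow> 'v \<Rightarrow> 'v set \<times> ('v \<Rightarrow> real) \<Rightarrow> real" where
  "offer v i a = (if i \<in> fst a then snd a i else v + 1)"

lemma offer_measurable: "offer v i \<in> borel_measurable actM"
  unfolding actM_def offer_def by measurable

subsection \<open>Sale probabilities\<close>

definition binom_below :: "nat \<Rightarrow> nat \<Rightarrow> real \<Rightarrow> real" where
  "binom_below l m a =
     (\<Sum>A\<le>l-1. real ((l-1) choose A) * a ^ A * (1 - a) ^ (l - 1 - A) * (if A < m then 1 else 0))"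

definition sale_prob_ties :: "nat \<Rightarrow> nat \<Rightarrow> nat \<Rightarrow> real \<Rightarrow> real \<Rightarrow> real" where
  "sale_prob_ties m N A a b =
     (\<Sum>B\<le>N. real (N choose B) * b ^ B * (1 - a - b) ^ (N - B) * sold m A B)"

lemma sale_prob_eq_sum_ties:
  "sale_prob l m a b = (\<Sum>A\<le>l-1. real ((l-1) choose A) * a ^ A * sale_prob_ties m (l-1-A) A a b)"
  unfolding sale_prob_def sale_prob_ties_def
  by (simp add: sum_distrib_left mult_ac diff_diff_add)

lemma binomial_sum_real:
  "(\<Sum>B\<le>N. real (N choose B) * b ^ B * (x::real) ^ (N - B)) = (b + x) ^ N"
  by (simp add: binomial_ring)

lemma sold_le_1: "sold m A B \<le> 1"
  unfolding sold_def by (auto simp: divide_le_eq)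

lemma sold_nonneg: "0 \<le> sold m A B"
  unfolding sold_def by auto

lemma sale_prob_ties_le:
  assumes "0 \<le> b" "0 \<le> 1 - a - b"
  shows "sale_prob_ties m N A a b \<le> (1 - a) ^ N * (if A < m then 1 else 0)"
proof (cases "A < m")
  case True
  have "sale_prob_ties m N A a b \<le> (\<Sum>B\<le>N. real (N choose B) * b ^ B * (1 - a - b) ^ (N - B))"
    unfolding sale_prob_ties_def
    using assms sold_le_1 by (intro sum_mono mult_left_le) auto
  also have "\<dots> = (1 - a) ^ N" by (simp add: binomial_sum_real)
  finally show ?thesis using True by simp
next
  case False
  then have "sold m A B = 0" for B unfolding sold_def by auto
  then show ?thesis using False by (simp add: sale_prob_ties_def)
qed

lemma sale_prob_ties_nonneg:
  assumes "0 \<le> b" "0 \<le> 1 - a - b"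
  shows "0 \<le> sale_prob_ties m N A a b"
  unfolding sale_prob_ties_def using assms sold_nonneg by (auto intro!: sum_nonneg)

lemma sale_prob_ties_zero: "sale_prob_ties m N A a 0 = (1 - a) ^ N * (if A < m then 1 else 0)"
proof -
  have "sale_prob_ties m N A a 0
      = (\<Sum>B\<in>{0}. real (N choose B) * 0 ^ B * (1 - a - 0) ^ (N - B) * sold m A B)"
    unfolding sale_prob_ties_def by (rule sum.mono_neutral_right) auto
  then show ?thesis by (simp add: sold_def)
qed

text \<open>With \<open>m\<close> ties and no lower offer, our offer is sold only with probability \<open>m / (m + 1)\<close>.\<close>
lemma sale_prob_ties_less:
  assumes "0 < b" "0 < 1 - a - b" "1 \<le> m" "m \<le> N"
  shows "sale_prob_ties m N 0 a b < (1 - a) ^ N"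
proof -
  have "sale_prob_ties m N 0 a b < (\<Sum>B\<le>N. real (N choose B) * b ^ B * (1 - a - b) ^ (N - B))"
    unfolding sale_prob_ties_def
  proof (rule sum_strict_mono_ex1)
    have "sold m 0 m < 1" using assms unfolding sold_def by (auto simp: divide_less_eq)
    moreover have "0 < real (N choose m) * b ^ m * (1 - a - b) ^ (N - m)"
      using assms by auto
    ultimately show "\<exists>B\<in>{..N}. real (N choose B) * b ^ B * (1 - a - b) ^ (N - B) * sold m 0 B
       < real (N choose B) * b ^ B * (1 - a - b) ^ (N - B)"
      using assms by (intro bexI[of _ m]) (auto simp: mult_less_cancel_left1)
  qed (use assms sold_le_1 in \<open>auto intro!: mult_left_le\<close>)
  also have "\<dots> = (1 - a) ^ N" by (simp add: binomial_sum_real)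
  finally show ?thesis .
qed

lemma sale_prob_term_le_binom_below_term:
  assumes "0 \<le> a" "0 \<le> b" "a + b \<le> 1"
  shows "real ((l-1) choose A) * a ^ A * sale_prob_ties m (l-1-A) A a b
       \<le> real ((l-1) choose A) * a ^ A * (1 - a) ^ (l - 1 - A) * (if A < m then 1 else 0)"
proof -
  have "sale_prob_ties m (l - 1 - A) A a b \<le> (1 - a) ^ (l - 1 - A) * (if A < m then 1 else 0)"
    using assms by (intro sale_prob_ties_le) auto
  then show ?thesis
    using assms by (simp add: mult.assoc mult_left_mono)
qed

lemma sale_prob_le_binom_below:
  assumes "0 \<le> a" "0 \<le> b" "a + b \<le> 1"
  shows "sale_prob l m a b \<le> binom_below l m a"
  unfolding sale_prob_eq_sum_ties binom_below_def
  using sale_prob_term_le_binom_below_term[OF assms] by (intro sum_mono)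

lemma sale_prob_no_ties: "sale_prob l m a 0 = binom_below l m a"
  unfolding sale_prob_eq_sum_ties binom_below_def sale_prob_ties_zero by (simp add: mult_ac)

lemma sale_prob_less_binom_below:
  assumes "0 \<le> a" "0 < b" "a + b < 1" "1 \<le> m" "m < l"
  shows "sale_prob l m a b < binom_below l m a"
  unfolding sale_prob_eq_sum_ties binom_below_def
proof (rule sum_strict_mono_ex1)
  show "\<exists>A\<in>{..l-1}. real (l - 1 choose A) * a ^ A * sale_prob_ties m (l - 1 - A) A a b
       < real (l - 1 choose A) * a ^ A * (1 - a) ^ (l - 1 - A) * (if A < m then 1 else 0)"
    using assms sale_prob_ties_less[of b a m "l-1"] by (intro bexI[of _ 0]) auto
qed (use assms sale_prob_term_le_binom_below_term[of a b] in auto)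

lemma sale_prob_pos:
  assumes "0 \<le> a" "0 \<le> b" "a + b < 1" "1 \<le> m"
  shows "0 < sale_prob l m a b"
proof -
  have "(1 - a - b) ^ (l-1)
      = (\<Sum>B\<in>{0}. real ((l-1) choose B) * b ^ B * (1 - a - b) ^ (l-1 - B) * sold m 0 B)"
    using assms by (simp add: sold_def)
  also have "\<dots> \<le> sale_prob_ties m (l-1) 0 a b" unfolding sale_prob_ties_def
    by (rule sum_mono2) (use assms sold_nonneg in auto)
  finally have "0 < sale_prob_ties m (l-1) 0 a b"
    using assms by (smt (verit) zero_less_power)
  moreover have "(\<Sum>A\<in>{0}. real ((l-1) choose A) * a ^ A * sale_prob_ties m (l-1-A) A a b)
      \<le> (\<Sum>A\<le>l-1. real ((l-1) choose A) * a ^ A * sale_prob_ties m (l-1-A) A a b)"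
    by (rule sum_mono2) (use assms sale_prob_ties_nonneg[of b a] in auto)
  ultimately show ?thesis unfolding sale_prob_eq_sum_ties by simp
qed

lemma tendsto_sale_prob:
  assumes "(a \<longlongrightarrow> a0) F" "(b \<longlongrightarrow> b0) F"
  shows "((\<lambda>y. sale_prob l m (a y) (b y)) \<longlongrightarrow> sale_prob l m a0 b0) F"
  unfolding sale_prob_def by (intro tendsto_intros assms)

lemma binom_below_le_1:
  assumes "0 \<le> a" "a \<le> 1"
  shows "binom_below l m a \<le> 1"
proof -
  have "binom_below l m a \<le> (\<Sum>A\<le>l-1. real ((l-1) choose A) * a ^ A * (1 - a) ^ (l - 1 - A))"
    unfolding binom_below_def by (intro sum_mono) (use assms in auto)
  also have "\<dots> = 1" using binomial_sum_real[of "l-1" a "1-a"] by simp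
  finally show ?thesis .
qed

lemma binom_below_pos: "1 \<le> m \<Longrightarrow> 0 \<le> a \<Longrightarrow> a < 1 \<Longrightarrow> 0 < binom_below l m a"
  using sale_prob_pos[of a 0 m l] sale_prob_no_ties by simp

lemma continuous_on_binom_below: "continuous_on UNIV (binom_below l m)"
  unfolding binom_below_def by (intro continuous_intros)

lemma binom_below_eq_Wfun:
  assumes "1 \<le> m" "m < l"
  shows "binom_below l m a = Wfun l m a"
proof -
  let ?b = "\<lambda>A. real ((l-1) choose A) * a ^ A * (1 - a) ^ (l - 1 - A)"
  have split: "{..l-1} = {..<m} \<union> {m..l-1}" "{..<m} \<inter> {m..l-1} = {}" using assms by auto
  have "sum ?b {..<m} + sum ?b {m..l-1} = 1"
    using binomial_sum_real[of "l-1" a "1-a"] sum.union_disjoint[of "{..<m}" "{m..l-1}" ?b]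
    unfolding split by simp
  moreover have "binom_below l m a = sum ?b {..<m}"
    unfolding binom_below_def split(1) by (subst sum.union_disjoint) (use split(2) in auto)
  ultimately show ?thesis unfolding Wfun_def wfun_def by simp
qed

lemma (in finite_borel_measure) tendsto_measure_lessThan_at_left:
  "((\<lambda>y. measure M {..<y}) \<longlongrightarrow> measure M {..<a}) (at_left a)"
proof (rule tendsto_at_left_sequentially[of "a - 1"])
  fix f :: "nat \<Rightarrow> real" assume f: "incseq f" "f \<longlonglongrightarrow> a" "\<And>x. f x < a" "\<And>x. a - 1 < f x"
  then have "(\<lambda>n. measure M {..<f n}) \<longlonglongrightarrow> measure M (\<Union>i. {..<f i})"
    by (intro finite_Lim_measure_incseq) (auto simp: incseq_def intro: less_le_trans)
  also have "(\<Union>i. {..<f i}) = {..<a}"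
    by (auto dest!: order_tendstoD(1)[OF f(2)] eventually_happens'[OF sequentially_bot]
             intro: less_trans f(3))
  finally show "(\<lambda>n. measure M {..<f n}) \<longlonglongrightarrow> measure M {..<a}" .
qed auto

lemma (in finite_borel_measure) measure_singleton_eq:
  "measure M {y} = cdf M y - measure M {..<y}"
proof -
  have "measure M ({..<y} \<union> {y}) = measure M {..<y} + measure M {y}"
    by (subst finite_measure_Union) auto
  moreover have "{..<y} \<union> {y} = {..y}" by auto
  ultimately show ?thesis by (simp add: cdf_def)
qed

lemma eventually_at_left_le: "(x0::real) \<le> v \<Longrightarrow> eventually (\<lambda>y. y \<le> v) (at_left x0)"
  by (rule eventually_mono[OF eventually_at_left_real[of "x0 - 1" x0]]) auto

lemma strict_mono_inv_bij:
  fixes g :: "'a::linorder \<Rightarrow> 'b::linorder"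
  shows "strict_mono g \<Longrightarrow> bij g \<Longrightarrow> strict_mono (inv g)"
  by (rule strict_mono_inv[of g]) (auto simp: bij_is_surj bij_is_inj)

lemma isCont_inv_bij:
  fixes g :: "real \<Rightarrow> real"
  assumes "continuous_on UNIV g" "bij g"
  shows "isCont (inv g) y"
proof -
  have "isCont (inv g) (g (inv g y))"
    by (rule isCont_inverse_function[where d=1])
       (use assms in \<open>auto simp: continuous_on_eq_continuous_at bij_is_inj\<close>)
  then show ?thesis using assms by (simp add: bij_is_surj surj_f_inv_f)
qed

subsection \<open>The equilibrium\<close>

locale sym_equilibrium =
  fixes E :: "'v::finite \<Rightarrow> 'v \<Rightarrow> bool"
    and l m n d :: nat
    and q :: "nat \<Rightarrow> real"
    and c v :: real
    and g :: "nat \<Rightarrow> real \<Rightarrow> real"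
    and Iset :: "nat \<Rightarrow> 'v set"
    and \<sigma> :: "nat \<Rightarrow> ('v set \<times> ('v \<Rightarrow> real)) measure"
    and t :: "nat \<Rightarrow> nat \<Rightarrow> real"
  assumes E_irrefl: "\<And>a. \<not> E a a"
    and ml: "1 \<le> m" "m < l"
    and q_nonneg: "\<And>k. k \<le> n \<Longrightarrow> 0 \<le> q k"
    and q_pos_sum: "(\<Sum>k=1..n. q k) < 1"
    and g_cont: "\<And>k. k \<in> {1..n} \<Longrightarrow> continuous_on UNIV (g k)"
    and g_mono: "\<And>k. k \<in> {1..n} \<Longrightarrow> strict_mono (g k)"
    and g_bij: "\<And>k. k \<in> {1..n} \<Longrightarrow> bij (g k)"
    and g_order: "\<And>i k p. i \<in> {1..n} \<Longrightarrow> k \<in> {1..n} \<Longrightarrow> k < i \<Longrightarrow> g i p < g k p"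
    and ratio: "\<And>i k x y. i \<in> {1..n} \<Longrightarrow> k \<in> {1..n} \<Longrightarrow> i < k \<Longrightarrow> x > y \<Longrightarrow> y > g i c \<Longrightarrow>
        (inv (g i) y - c) / (inv (g k) y - c) < (inv (g i) x - c) / (inv (g k) x - c)"
    and f1v: "inv (g 1) v > c"
    and mv: "mean_valid E d Iset"
    and NE: "symNE l m n q c v g E \<sigma>"
    and supp: "\<And>k. k \<in> {1..n} \<Longrightarrow> AE a in \<sigma> k. fst a \<in> Iset ` {1..d}"
    and t_def: "\<And>s k. s \<in> {1..d} \<Longrightarrow> k \<in> {1..n} \<Longrightarrow> t s k = measure (\<sigma> k) {a. fst a = Iset s}"
begin

abbreviation f :: "nat \<Rightarrow> real \<Rightarrow> real" where "f k \<equiv> inv (g k)"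

lemma g_f: "k \<in> {1..n} \<Longrightarrow> g k (f k y) = y"
  using g_bij by (simp add: bij_is_surj surj_f_inv_f)

lemma strict_mono_f: "k \<in> {1..n} \<Longrightarrow> strict_mono (f k)"
  using strict_mono_inv_bij g_mono g_bij by blast

lemma isCont_f: "k \<in> {1..n} \<Longrightarrow> isCont (f k) y"
  using isCont_inv_bij g_cont g_bij by blast

lemma f_gt_c_iff: "k \<in> {1..n} \<Longrightarrow> c < f k x \<longleftrightarrow> g k c < x"
  using strict_mono_less[OF g_mono, of k c "f k x"] g_f by simp

lemma f_less_f_higher: "k \<in> {1..n} \<Longrightarrow> k' \<in> {1..n} \<Longrightarrow> k < k' \<Longrightarrow> f k x < f k' x"
proof -
  assume a: "k \<in> {1..n}" "k' \<in> {1..n}" "k < k'"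
  have "g k' (f k x) < g k (f k x)" using g_order a by auto
  also have "\<dots> = g k' (f k' x)" using g_f a by simp
  finally show ?thesis using g_mono[OF a(2)] by (simp add: strict_mono_less)
qed

lemma f_v_gt_c: "k \<in> {1..n} \<Longrightarrow> c < f k v"
  using f1v f_less_f_higher[of 1 k v] by (cases "k = 1") auto

text \<open>The ratio condition as a single-crossing property; \<open>A\<close> and \<open>B\<close> stand for the sale
  probabilities at \<open>y\<close> and at \<open>z\<close>.\<close>
lemma single_crossing:
  assumes k: "k \<in> {1..n}" "k' \<in> {1..n}" "k < k'" and yz: "y < z" and fy: "c < f k y"
    and A: "0 < A" and B: "0 < B"
    and lower: "(f k z - c) * B \<le> (f k y - c) * A"
    and higher: "(f k' y - c) * A \<le> (f k' z - c) * B"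
  shows False
proof -
  have r: "(f k y - c) / (f k' y - c) < (f k z - c) / (f k' z - c)"
    using ratio[OF k yz] fy f_gt_c_iff k by auto
  have b1: "c < f k' y" using fy f_less_f_higher[OF k] by (smt (verit))
  have a2: "c < f k z" using fy strict_monoD[OF strict_mono_f[OF k(1)] yz] by simp
  have b2: "c < f k' z" using b1 strict_monoD[OF strict_mono_f[OF k(2)] yz] by simp
  have "(f k z - c) * B * ((f k' y - c) * A) \<le> (f k y - c) * A * ((f k' z - c) * B)"
    by (rule mult_mono[OF lower higher]) (use a2 B b1 A fy b2 in auto)
  then have "(f k z - c) * (f k' y - c) \<le> (f k y - c) * (f k' z - c)"
    using A B by (simp add: mult_ac mult_le_cancel_right)
  moreover have "(f k y - c) * (f k' z - c) < (f k z - c) * (f k' y - c)"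
    using r b1 b2 by (simp add: divide_less_eq_1 field_simps)
  ultimately show False by simp
qed

lemma equilibrium_at:
  assumes "k \<in> {1..n}"
  shows "prob_space (\<sigma> k) \<and> sets (\<sigma> k) = sets actM
    \<and> integrable (\<sigma> k) (payoff l m n q c v g \<sigma> k)
    \<and> (\<forall>I x. indep E I \<longrightarrow>
           payoff l m n q c v g \<sigma> k (I, x) \<le> (\<integral>a. payoff l m n q c v g \<sigma> k a \<partial>\<sigma> k))"
  using NE assms unfolding symNE_def by blast

lemma prob_space_sigma: "k \<in> {1..n} \<Longrightarrow> prob_space (\<sigma> k)"
  using equilibrium_at by blast

lemma sets_sigma: "k \<in> {1..n} \<Longrightarrow> sets (\<sigma> k) = sets actM"
  using equilibrium_at by blast

lemma integrable_payoff: "k \<in> {1..n} \<Longrightarrow> integrable (\<sigma> k) (payoff l m n q c v g \<sigma> k)"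
  using equilibrium_at by blast

lemma payoff_deviation_le:
  "k \<in> {1..n} \<Longrightarrow> indep E I \<Longrightarrow>
     payoff l m n q c v g \<sigma> k (I, x) \<le> (\<integral>a. payoff l m n q c v g \<sigma> k a \<partial>\<sigma> k)"
  using equilibrium_at by blast

lemma space_sigma: "k \<in> {1..n} \<Longrightarrow> space (\<sigma> k) = UNIV"
  using sets_eq_imp_space_eq[OF sets_sigma] space_actM by simp

lemma sets_sigma_fst_eq: "k \<in> {1..n} \<Longrightarrow> {a. fst a = I} \<in> sets (\<sigma> k)"
proof -
  assume k: "k \<in> {1..n}"
  have "{a \<in> space actM. fst a = I} \<in> sets actM" unfolding actM_def by measurable
  moreover have "{a. fst a = I} = {a \<in> space actM. fst a = I}" using space_actM by auto
  ultimately show ?thesis using sets_sigma[OF k] by simp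
qed

lemma measurable_sigma:
  assumes "k \<in> {1..n}" shows "measurable (\<sigma> k) N = measurable actM N"
  using sets_sigma[OF assms] by (rule measurable_cong_sets) simp

lemma offer_measurable_sigma: "k \<in> {1..n} \<Longrightarrow> offer v i \<in> borel_measurable (\<sigma> k)"
  unfolding measurable_sigma using offer_measurable by simp

lemma offer_vimage_sets: "k \<in> {1..n} \<Longrightarrow> S \<in> sets borel \<Longrightarrow> offer v i -` S \<in> sets (\<sigma> k)"
  using measurable_sets[OF offer_measurable_sigma, of k S i] space_sigma by simp

definition offer_law :: "nat \<Rightarrow> 'v \<Rightarrow> real measure" where
  "offer_law k i = distr (\<sigma> k) borel (offer v i)"

lemma real_distribution_offer_law: "k \<in> {1..n} \<Longrightarrow> real_distribution (offer_law k i)"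
  unfolding offer_law_def
  using prob_space_sigma offer_measurable_sigma by (simp add: prob_space.real_distribution_distr)

lemma measure_offer_law:
  "k \<in> {1..n} \<Longrightarrow> S \<in> sets borel \<Longrightarrow> measure (offer_law k i) S = measure (\<sigma> k) (offer v i -` S)"
  unfolding offer_law_def using measure_distr[OF offer_measurable_sigma] space_sigma by simp

lemma lowprob_eq_offer_law:
  "lowprob n q v \<sigma> i x = (\<Sum>k=1..n. q k * measure (offer_law k i) ({..<x} \<inter> {..v}))"
  unfolding lowprob_def
proof (intro sum.cong refl)
  fix k assume "k \<in> {1..n}"
  moreover have "offer v i -` ({..<x} \<inter> {..v}) = {a. i \<in> fst a \<and> snd a i < x \<and> snd a i \<le> v}"
    unfolding offer_def by (auto split: if_splits)
  ultimately show "q k * measure (\<sigma> k) {a. i \<in> fst a \<and> snd a i < x \<and> snd a i \<le> v} =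
        q k * measure (offer_law k i) ({..<x} \<inter> {..v})" using measure_offer_law by simp
qed

lemma eqprob_eq_offer_law:
  "eqprob n q v \<sigma> i x = (\<Sum>k=1..n. q k * measure (offer_law k i) ({x} \<inter> {..v}))"
  unfolding eqprob_def
proof (intro sum.cong refl)
  fix k assume "k \<in> {1..n}"
  moreover have "offer v i -` ({x} \<inter> {..v}) = {a. i \<in> fst a \<and> snd a i = x \<and> snd a i \<le> v}"
    unfolding offer_def by (auto split: if_splits)
  ultimately show "q k * measure (\<sigma> k) {a. i \<in> fst a \<and> snd a i = x \<and> snd a i \<le> v} =
        q k * measure (offer_law k i) ({x} \<inter> {..v})" using measure_offer_law by simp
qed

abbreviation F where "F i x \<equiv> lowprob n q v \<sigma> i x"
abbreviation Tie where "Tie i x \<equiv> eqprob n q v \<sigma> i x"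

lemma lowprob_nonneg: "0 \<le> F i x"
  unfolding lowprob_eq_offer_law using q_nonneg by (auto intro!: sum_nonneg)

lemma eqprob_nonneg: "0 \<le> Tie i x"
  unfolding eqprob_eq_offer_law using q_nonneg by (auto intro!: sum_nonneg)

lemma lowprob_add_eqprob_less_1: "F i x + Tie i x < 1"
proof -
  have "F i x + Tie i x = (\<Sum>k=1..n. q k * measure (offer_law k i) ({..<x} \<inter> {..v} \<union> {x} \<inter> {..v}))"
    unfolding lowprob_eq_offer_law eqprob_eq_offer_law sum.distrib[symmetric]
  proof (intro sum.cong refl)
    fix k assume "k \<in> {1..n}"
    then interpret real_distribution "offer_law k i" by (rule real_distribution_offer_law)
    show "q k * measure (offer_law k i) ({..<x} \<inter> {..v}) + q k * measure (offer_law k i) ({x} \<inter> {..v})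
        = q k * measure (offer_law k i) ({..<x} \<inter> {..v} \<union> {x} \<inter> {..v})"
      by (subst finite_measure_Union) (auto simp: distrib_left)
  qed
  also have "\<dots> \<le> (\<Sum>k=1..n. q k * 1)"
  proof (intro sum_mono mult_left_mono)
    fix k assume "k \<in> {1..n}"
    then interpret real_distribution "offer_law k i" by (rule real_distribution_offer_law)
    show "measure (offer_law k i) ({..<x} \<inter> {..v} \<union> {x} \<inter> {..v}) \<le> 1" by simp
  qed (use q_nonneg in auto)
  finally show ?thesis using q_pos_sum by simp
qed

lemma sale_prob_bounds:
  "0 < sale_prob l m (F i x) (Tie i x)" "sale_prob l m (F i x) (Tie i x) \<le> 1"
proof -
  have a: "0 \<le> F i x" "0 \<le> Tie i x" "F i x + Tie i x < 1"
    using lowprob_nonneg eqprob_nonneg lowprob_add_eqprob_less_1 by auto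
  show "0 < sale_prob l m (F i x) (Tie i x)" using sale_prob_pos a ml by simp
  have "sale_prob l m (F i x) (Tie i x) \<le> binom_below l m (F i x)"
    using sale_prob_le_binom_below a by simp
  also have "\<dots> \<le> 1" using binom_below_le_1 a by simp
  finally show "sale_prob l m (F i x) (Tie i x) \<le> 1" .
qed

definition node_payoff :: "nat \<Rightarrow> 'v \<Rightarrow> real \<Rightarrow> real" where
  "node_payoff k i x = (if x \<le> v then (f k x - c) * sale_prob l m (F i x) (Tie i x) else 0)"

lemma payoff_eq_sum_node_payoff:
  "payoff l m n q c v g \<sigma> k a = (\<Sum>i\<in>fst a. node_payoff k i (snd a i))"
  unfolding payoff_def node_payoff_def ..

lemma node_payoff_le: "k \<in> {1..n} \<Longrightarrow> node_payoff k i x \<le> max 0 (f k v - c)"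
proof -
  assume k: "k \<in> {1..n}"
  have "(f k x - c) * sale_prob l m (F i x) (Tie i x) \<le> max 0 (f k x - c)"
    using sale_prob_bounds[of i x] by (cases "0 \<le> f k x - c") (auto simp: mult_left_le mult_nonpos_nonneg)
  moreover have "x \<le> v \<Longrightarrow> f k x \<le> f k v"
    using strict_mono_less_eq[OF strict_mono_f[OF k]] by simp
  ultimately show ?thesis unfolding node_payoff_def by auto
qed

definition node_value :: "nat \<Rightarrow> 'v \<Rightarrow> real" where
  "node_value k i = (SUP x. node_payoff k i x)"

lemma bdd_above_node_payoff: "k \<in> {1..n} \<Longrightarrow> bdd_above (range (node_payoff k i))"
  using node_payoff_le by (intro bdd_aboveI[where M="max 0 (f k v - c)"]) auto

lemma node_payoff_le_value: "k \<in> {1..n} \<Longrightarrow> node_payoff k i x \<le> node_value k i"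
  unfolding node_value_def by (rule cSUP_upper) (auto intro: bdd_above_node_payoff)

lemma node_value_pos: "k \<in> {1..n} \<Longrightarrow> 0 < node_value k i"
proof -
  assume k: "k \<in> {1..n}"
  have "0 < node_payoff k i v"
    unfolding node_payoff_def using f_v_gt_c[OF k] sale_prob_bounds by simp
  then show ?thesis using node_payoff_le_value[OF k] by (smt (verit))
qed

definition best_offers :: "nat \<Rightarrow> 'v \<Rightarrow> real set" where
  "best_offers k i = {x. node_payoff k i x = node_value k i}"

lemma best_offers_D: "k \<in> {1..n} \<Longrightarrow> x \<in> best_offers k i \<Longrightarrow> x \<le> v \<and> c < f k x"
proof -
  assume k: "k \<in> {1..n}" and x: "x \<in> best_offers k i"
  then have p: "0 < node_payoff k i x" using node_value_pos unfolding best_offers_def by simp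
  then have "x \<le> v" unfolding node_payoff_def by (auto split: if_splits)
  moreover have "c < f k x"
    using p \<open>x \<le> v\<close> sale_prob_bounds[of i x] unfolding node_payoff_def
    by (auto simp: zero_less_mult_iff)
  ultimately show ?thesis by simp
qed



lemma mean_valid_Iset:
  "\<And>s r. s \<in> {1..d} \<Longrightarrow> r \<in> {1..d} \<Longrightarrow> s \<noteq> r \<Longrightarrow> Iset s \<inter> Iset r = {}"
  "\<And>s. s \<in> {1..d} \<Longrightarrow> maximal_indep E (Iset s)"
  using mv unfolding mean_valid_def by blast+

lemma Iset_nonempty: "s \<in> {1..d} \<Longrightarrow> Iset s \<noteq> {}"
proof
  assume s: "s \<in> {1..d}" and empty: "Iset s = {}"
  obtain w :: 'v where True by simp
  have "indep E {w}" unfolding indep_def using E_irrefl by auto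
  moreover have "\<not> indep E (insert w (Iset s))"
    using mean_valid_Iset(2)[OF s] unfolding maximal_indep_def empty by blast
  ultimately show False using empty by simp
qed

lemma Iset_indep: "s \<in> {1..d} \<Longrightarrow> indep E (Iset s)"
  using mean_valid_Iset(2) unfolding maximal_indep_def by auto

lemma Iset_unique: "s \<in> {1..d} \<Longrightarrow> s' \<in> {1..d} \<Longrightarrow> i \<in> Iset s \<Longrightarrow> i \<in> Iset s' \<Longrightarrow> s' = s"
  using mean_valid_Iset(1) by blast

lemma Iset_inj: "s \<in> {1..d} \<Longrightarrow> s' \<in> {1..d} \<Longrightarrow> Iset s = Iset s' \<Longrightarrow> s = s'"
  using Iset_nonempty Iset_unique by blast

lemma card_Iset_pos: "s \<in> {1..d} \<Longrightarrow> 0 < card (Iset s)"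
  using Iset_nonempty by (simp add: card_gt_0_iff)

lemma t_nonneg: "s \<in> {1..d} \<Longrightarrow> k \<in> {1..n} \<Longrightarrow> 0 \<le> t s k"
  using t_def by simp

lemma t_le_1: "s \<in> {1..d} \<Longrightarrow> k \<in> {1..n} \<Longrightarrow> t s k \<le> 1"
  using t_def prob_space.prob_le_1[OF prob_space_sigma] by simp

lemma sum_t_eq_1: assumes k: "k \<in> {1..n}" shows "(\<Sum>s=1..d. t s k) = 1"
proof -
  interpret prob_space "\<sigma> k" using prob_space_sigma[OF k] .
  have chosen: "{a \<in> space (\<sigma> k). fst a \<in> Iset ` {1..d}} = (\<Union>s\<in>{1..d}. {a. fst a = Iset s})"
    using space_sigma[OF k] by auto
  have "(\<Sum>s=1..d. t s k) = (\<Sum>s=1..d. measure (\<sigma> k) {a. fst a = Iset s})"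
    using t_def k by simp
  also have "\<dots> = measure (\<sigma> k) (\<Union>s\<in>{1..d}. {a. fst a = Iset s})"
    by (rule measure_finite_Union[symmetric])
       (use sets_sigma_fst_eq[OF k] Iset_inj in \<open>auto simp: disjoint_family_on_def\<close>)
  also have "\<dots> = 1"
    using prob_Collect_eq_1[of "\<lambda>a. fst a \<in> Iset ` {1..d}"] supp[OF k] sets_sigma_fst_eq[OF k]
    unfolding chosen by auto
  finally show ?thesis .
qed

subsection \<open>Every used set attains the equilibrium value\<close>

definition eq_value :: "nat \<Rightarrow> real" where
  "eq_value k = (\<integral>a. payoff l m n q c v g \<sigma> k a \<partial>\<sigma> k)"

abbreviation set_value :: "nat \<Rightarrow> nat \<Rightarrow> real" where
  "set_value k s \<equiv> \<Sum>i\<in>Iset s. node_value k i"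

lemma sum_node_payoff_le_eq_value:
  "k \<in> {1..n} \<Longrightarrow> s \<in> {1..d} \<Longrightarrow> (\<Sum>i\<in>Iset s. node_payoff k i (x i)) \<le> eq_value k"
  using payoff_deviation_le[of k "Iset s" x] Iset_indep[of s]
  unfolding eq_value_def payoff_eq_sum_node_payoff by simp

text \<open>Offering \<open>\<epsilon>/|I\<^sub>s|\<close>-optimal penalties at every node of \<open>I\<^sub>s\<close> is a deviation.\<close>
lemma set_value_le_eq_value:
  assumes k: "k \<in> {1..n}" and s: "s \<in> {1..d}"
  shows "set_value k s \<le> eq_value k"
proof (rule ccontr)
  assume "\<not> set_value k s \<le> eq_value k"
  define M where "M = card (Iset s)"
  define \<epsilon> where "\<epsilon> = (set_value k s - eq_value k) / M"
  have M: "0 < M" using card_Iset_pos[OF s] M_def by simp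
  have eps: "0 < \<epsilon>" using \<open>\<not> set_value k s \<le> eq_value k\<close> M unfolding \<epsilon>_def by simp
  have "\<exists>x. node_value k i - \<epsilon> < node_payoff k i x" for i
    using eps less_cSUP_iff[of UNIV "node_payoff k i" "node_value k i - \<epsilon>"] bdd_above_node_payoff[OF k]
    unfolding node_value_def by auto
  then obtain x where x: "\<And>i. node_value k i - \<epsilon> < node_payoff k i (x i)" by metis
  have "(\<Sum>i\<in>Iset s. node_value k i - \<epsilon>) < (\<Sum>i\<in>Iset s. node_payoff k i (x i))"
    by (rule sum_strict_mono) (use x Iset_nonempty[OF s] in auto)
  also have "\<dots> \<le> eq_value k" by (rule sum_node_payoff_le_eq_value[OF k s])
  finally have "set_value k s - M * \<epsilon> < eq_value k" by (simp add: sum_subtractf M_def)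
  then show False using M unfolding \<epsilon>_def by simp
qed

definition chosen_set_value :: "nat \<Rightarrow> 'v set \<times> ('v \<Rightarrow> real) \<Rightarrow> real" where
  "chosen_set_value k a = (\<Sum>s=1..d. indicator {a. fst a = Iset s} a * set_value k s)"

lemma chosen_set_value_at:
  assumes s: "s \<in> {1..d}" and a: "fst a = Iset s"
  shows "chosen_set_value k a = set_value k s"
proof -
  have "chosen_set_value k a = (\<Sum>s'=1..d. if s' = s then set_value k s' else 0)"
    unfolding chosen_set_value_def
    by (intro sum.cong refl) (use Iset_inj[OF _ s] a in \<open>auto simp: indicator_def\<close>)
  also have "\<dots> = set_value k s" using s by simp
  finally show ?thesis .
qed

lemma integrable_indicator_set_value:
  assumes k: "k \<in> {1..n}"
  shows "integrable (\<sigma> k) (\<lambda>a. indicator {a. fst a = Iset s} a * set_value k s)"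
proof -
  interpret prob_space "\<sigma> k" using prob_space_sigma[OF k] .
  show ?thesis
    using sets_sigma_fst_eq[OF k]
    by (intro integrable_mult_left integrable_real_indicator) (auto simp: less_top[symmetric])
qed

lemma integral_chosen_set_value:
  assumes k: "k \<in> {1..n}"
  shows "integrable (\<sigma> k) (chosen_set_value k)"
    and "(\<integral>a. chosen_set_value k a \<partial>\<sigma> k) = (\<Sum>s=1..d. t s k * set_value k s)"
proof -
  show "integrable (\<sigma> k) (chosen_set_value k)"
    unfolding chosen_set_value_def
    by (intro Bochner_Integration.integrable_sum integrable_indicator_set_value[OF k])
  show "(\<integral>a. chosen_set_value k a \<partial>\<sigma> k) = (\<Sum>s=1..d. t s k * set_value k s)"
    unfolding chosen_set_value_def
  proof (subst Bochner_Integration.integral_sum)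
    show "(\<Sum>s = 1..d. \<integral>a. indicator {a. fst a = Iset s} a * set_value k s \<partial>\<sigma> k)
        = (\<Sum>s = 1..d. t s k * set_value k s)"
      by (intro sum.cong refl) (simp add: t_def[OF _ k] space_sigma[OF k])
  qed (rule integrable_indicator_set_value[OF k])
qed

lemma AE_payoff_le_chosen_set_value:
  assumes k: "k \<in> {1..n}"
  shows "AE a in \<sigma> k. payoff l m n q c v g \<sigma> k a \<le> chosen_set_value k a"
  using supp[OF k]
proof eventually_elim
  case (elim a)
  then obtain s where s: "s \<in> {1..d}" "fst a = Iset s" by auto
  then have "payoff l m n q c v g \<sigma> k a = (\<Sum>i\<in>Iset s. node_payoff k i (snd a i))"
    unfolding payoff_eq_sum_node_payoff by simp
  also have "\<dots> \<le> set_value k s" by (intro sum_mono node_payoff_le_value[OF k])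
  finally show ?case using chosen_set_value_at[OF s] by simp
qed

lemma weighted_set_values_eq_value:
  assumes k: "k \<in> {1..n}"
  shows "(\<Sum>s=1..d. t s k * set_value k s) = eq_value k"
proof (rule antisym)
  have "(\<Sum>s=1..d. t s k * set_value k s) \<le> (\<Sum>s=1..d. t s k * eq_value k)"
    by (intro sum_mono mult_left_mono) (use set_value_le_eq_value[OF k] t_nonneg k in auto)
  also have "\<dots> = eq_value k" using sum_t_eq_1[OF k] by (simp add: sum_distrib_right[symmetric])
  finally show "(\<Sum>s=1..d. t s k * set_value k s) \<le> eq_value k" .
  have "eq_value k \<le> (\<integral>a. chosen_set_value k a \<partial>\<sigma> k)"
    unfolding eq_value_def
    by (rule integral_mono_AE[OF integrable_payoff[OF k] integral_chosen_set_value(1)[OF k]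
          AE_payoff_le_chosen_set_value[OF k]])
  then show "eq_value k \<le> (\<Sum>s=1..d. t s k * set_value k s)"
    using integral_chosen_set_value(2)[OF k] by simp
qed

lemma set_value_eq_eq_value:
  assumes k: "k \<in> {1..n}" and s: "s \<in> {1..d}" and ts: "0 < t s k"
  shows "set_value k s = eq_value k"
proof -
  have "(\<Sum>s=1..d. t s k * (eq_value k - set_value k s)) = 0"
    using weighted_set_values_eq_value[OF k] sum_t_eq_1[OF k]
    by (simp add: right_diff_distrib sum_subtractf sum_distrib_right[symmetric])
  moreover have "\<forall>s\<in>{1..d}. 0 \<le> t s k * (eq_value k - set_value k s)"
    using set_value_le_eq_value[OF k] t_nonneg k by auto
  ultimately have "t s k * (eq_value k - set_value k s) = 0"
    using sum_nonneg_eq_0_iff[of "{1..d}" "\<lambda>s. t s k * (eq_value k - set_value k s)"] s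
    by blast
  then show ?thesis using ts by simp
qed

lemma AE_offers_best:
  assumes k: "k \<in> {1..n}"
  shows "AE a in \<sigma> k. \<forall>i\<in>fst a. snd a i \<in> best_offers k i"
proof -
  let ?P = "payoff l m n q c v g \<sigma> k"
  have int_diff: "integrable (\<sigma> k) (\<lambda>a. chosen_set_value k a - ?P a)"
    using integral_chosen_set_value(1)[OF k] integrable_payoff[OF k] by simp
  have "(\<integral>a. chosen_set_value k a - ?P a \<partial>\<sigma> k) = 0"
    using integral_chosen_set_value[OF k] integrable_payoff[OF k] weighted_set_values_eq_value[OF k]
    unfolding eq_value_def by simp
  then have "AE a in \<sigma> k. chosen_set_value k a - ?P a = 0"
    using integral_nonneg_eq_0_iff_AE[OF int_diff] AE_payoff_le_chosen_set_value[OF k]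
    by (auto elim: AE_mp)
  then show ?thesis
    using supp[OF k]
  proof eventually_elim
    case (elim a)
    then obtain s where s: "s \<in> {1..d}" "fst a = Iset s" by auto
    have eq: "(\<Sum>i\<in>Iset s. node_payoff k i (snd a i)) = (\<Sum>i\<in>Iset s. node_value k i)"
      using elim chosen_set_value_at[OF s] unfolding payoff_eq_sum_node_payoff s by simp
    have "node_payoff k i (snd a i) = node_value k i" if "i \<in> Iset s" for i
      using sum_mono_inv[OF eq node_payoff_le_value[OF k] that] by simp
    then show ?case using s by (simp add: best_offers_def)
  qed
qed


subsection \<open>No atoms below v\<close>

lemma AE_offer_best:
  "k \<in> {1..n} \<Longrightarrow> AE a in \<sigma> k. i \<in> fst a \<longrightarrow> snd a i \<in> best_offers k i"
  using AE_offers_best by (rule AE_mp) auto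

lemma offer_law_null:
  assumes k: "k \<in> {1..n}" and S: "S \<in> sets borel"
    and disj: "S \<inter> best_offers k i = {}" and no_offer: "v + 1 \<notin> S"
  shows "measure (offer_law k i) S = 0"
proof -
  have "measure (\<sigma> k) (offer v i -` S) = measure (\<sigma> k) {}"
  proof (rule measure_eq_AE)
    show "AE a in \<sigma> k. (a \<in> offer v i -` S) = (a \<in> {})"
      using AE_offer_best[OF k, of i] by eventually_elim (use disj no_offer in \<open>auto simp: offer_def\<close>)
  qed (use offer_vimage_sets[OF k S] in auto)
  then show ?thesis using measure_offer_law[OF k S] by simp
qed

lemma offer_law_atMost:
  assumes k: "k \<in> {1..n}" and s: "s \<in> {1..d}" and i: "i \<in> Iset s"
  shows "measure (offer_law k i) {..v} = t s k"
proof -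
  have "measure (\<sigma> k) (offer v i -` {..v}) = measure (\<sigma> k) {a. fst a = Iset s}"
  proof (rule measure_eq_AE)
    show "AE a in \<sigma> k. (a \<in> offer v i -` {..v}) = (a \<in> {a. fst a = Iset s})"
      using AE_offer_best[OF k, of i] supp[OF k]
    proof eventually_elim
      case (elim a)
      then obtain s' where s': "s' \<in> {1..d}" "fst a = Iset s'" by auto
      have "i \<in> fst a \<longleftrightarrow> fst a = Iset s" using s' Iset_unique[OF s s'(1) i] i by auto
      moreover have "i \<in> fst a \<Longrightarrow> snd a i \<le> v" using elim(1) best_offers_D[OF k] by auto
      ultimately show ?case by (auto simp: offer_def)
    qed
  qed (use offer_vimage_sets[OF k] sets_sigma_fst_eq[OF k] in auto)
  then show ?thesis using measure_offer_law[OF k] t_def[OF s k] by simp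
qed

lemma best_offers_nonempty:
  assumes k: "k \<in> {1..n}" and s: "s \<in> {1..d}" and i: "i \<in> Iset s" and ts: "0 < t s k"
  shows "best_offers k i \<noteq> {}"
proof
  assume "best_offers k i = {}"
  then have "measure (offer_law k i) {..v} = 0" by (intro offer_law_null[OF k]) auto
  then show False using offer_law_atMost[OF k s i] ts by simp
qed

lemma tendsto_lowprob_at_left:
  assumes x0: "x0 \<le> v"
  shows "(F i \<longlongrightarrow> F i x0) (at_left x0)"
proof -
  have below: "F i y = (\<Sum>k=1..n. q k * measure (offer_law k i) {..<y})" if "y \<le> v" for y
    unfolding lowprob_eq_offer_law using that
    by (intro sum.cong refl) (auto intro!: arg_cong[where f="measure _"])
  have "((\<lambda>y. \<Sum>k=1..n. q k * measure (offer_law k i) {..<y})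
          \<longlongrightarrow> (\<Sum>k=1..n. q k * measure (offer_law k i) {..<x0})) (at_left x0)"
  proof (intro tendsto_sum tendsto_mult_left)
    fix k assume "k \<in> {1..n}"
    then interpret real_distribution "offer_law k i" by (rule real_distribution_offer_law)
    show "((\<lambda>y. measure (offer_law k i) {..<y}) \<longlongrightarrow> measure (offer_law k i) {..<x0}) (at_left x0)"
      by (rule tendsto_measure_lessThan_at_left)
  qed
  then have "((\<lambda>y. \<Sum>k=1..n. q k * measure (offer_law k i) {..<y}) \<longlongrightarrow> F i x0) (at_left x0)"
    using below[OF x0] by simp
  then show ?thesis
    by (rule Lim_transform_eventually) (use eventually_at_left_le[OF x0] below in \<open>auto elim: eventually_mono\<close>)
qed

lemma tendsto_eqprob_at_left:
  assumes x0: "x0 \<le> v"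
  shows "(Tie i \<longlongrightarrow> 0) (at_left x0)"
proof -
  let ?L = "\<lambda>k. measure (offer_law k i) {..<x0}"
  have tie: "Tie i y = (\<Sum>k=1..n. q k * (cdf (offer_law k i) y - measure (offer_law k i) {..<y}))"
    if "y \<le> v" for y
    unfolding eqprob_eq_offer_law
  proof (intro sum.cong refl)
    fix k assume "k \<in> {1..n}"
    then interpret real_distribution "offer_law k i" by (rule real_distribution_offer_law)
    have "{y} \<inter> {..v} = {y}" using that by auto
    then show "q k * measure (offer_law k i) ({y} \<inter> {..v})
        = q k * (cdf (offer_law k i) y - measure (offer_law k i) {..<y})"
      using measure_singleton_eq by simp
  qed
  have "((\<lambda>y. \<Sum>k=1..n. q k * (cdf (offer_law k i) y - measure (offer_law k i) {..<y}))
          \<longlongrightarrow> (\<Sum>k=1..n. q k * (?L k - ?L k))) (at_left x0)"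
  proof (intro tendsto_sum tendsto_mult_left tendsto_diff)
    fix k assume "k \<in> {1..n}"
    then interpret real_distribution "offer_law k i" by (rule real_distribution_offer_law)
    show "((\<lambda>y. measure (offer_law k i) {..<y}) \<longlongrightarrow> ?L k) (at_left x0)"
      by (rule tendsto_measure_lessThan_at_left)
    show "(cdf (offer_law k i) \<longlongrightarrow> ?L k) (at_left x0)"
      by (rule cdf_at_left)
  qed
  then have "((\<lambda>y. \<Sum>k=1..n. q k * (cdf (offer_law k i) y - measure (offer_law k i) {..<y}))
          \<longlongrightarrow> 0) (at_left x0)"
    by simp
  then show ?thesis
    by (rule Lim_transform_eventually)
       (use eventually_at_left_le[OF x0] tie in \<open>auto elim: eventually_mono\<close>)
qed

lemma tendsto_node_payoff_at_left:
  assumes k: "k \<in> {1..n}" and x0: "x0 \<le> v"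
  shows "(node_payoff k i \<longlongrightarrow> (f k x0 - c) * sale_prob l m (F i x0) 0) (at_left x0)"
proof -
  have "(f k \<longlongrightarrow> f k x0) (at_left x0)"
    using isCont_f[OF k, of x0] unfolding isCont_def by (rule filterlim_mono) (simp_all add: at_le)
  then have "((\<lambda>y. (f k y - c) * sale_prob l m (F i y) (Tie i y))
      \<longlongrightarrow> (f k x0 - c) * sale_prob l m (F i x0) 0) (at_left x0)"
    by (intro tendsto_intros tendsto_sale_prob tendsto_lowprob_at_left tendsto_eqprob_at_left x0)
  then show ?thesis
    by (rule Lim_transform_eventually)
       (use eventually_at_left_le[OF x0] in \<open>auto simp: node_payoff_def elim: eventually_mono\<close>)
qed

text \<open>An atom at a best offer would make undercutting it slightly strictly better.\<close>
lemma eqprob_eq_0: "Tie i x0 = 0"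
proof (rule ccontr)
  assume "Tie i x0 \<noteq> 0"
  then have pos: "0 < Tie i x0" using eqprob_nonneg[of i x0] by simp
  have x0: "x0 \<le> v"
  proof (rule ccontr)
    assume "\<not> x0 \<le> v"
    then have "{x0} \<inter> {..v} = {}" by auto
    then show False using pos unfolding eqprob_eq_offer_law by simp
  qed
  then have atom: "{x0} \<inter> {..v} = {x0}" by auto
  have "\<exists>k\<in>{1..n}. 0 < q k * measure (offer_law k i) {x0}"
  proof (rule ccontr)
    assume "\<not> ?thesis"
    then have "Tie i x0 \<le> 0"
      unfolding eqprob_eq_offer_law atom by (intro sum_nonpos) (auto simp: not_less)
    then show False using pos by simp
  qed
  then obtain k where k: "k \<in> {1..n}" and "0 < q k * measure (offer_law k i) {x0}" by blast
  then have "measure (offer_law k i) {x0} \<noteq> 0" by auto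
  then have best: "x0 \<in> best_offers k i"
    using offer_law_null[OF k, of "{x0}" i] x0 by auto
  have "node_value k i = (f k x0 - c) * sale_prob l m (F i x0) (Tie i x0)"
    using best x0 unfolding best_offers_def node_payoff_def by simp
  also have "\<dots> < (f k x0 - c) * sale_prob l m (F i x0) 0"
    using sale_prob_less_binom_below[of "F i x0" "Tie i x0" m l] lowprob_nonneg pos
      lowprob_add_eqprob_less_1 ml best_offers_D[OF k best] sale_prob_no_ties by simp
  finally have "eventually (\<lambda>y. node_value k i < node_payoff k i y) (at_left x0)"
    using order_tendstoD(1)[OF tendsto_node_payoff_at_left[OF k x0]] by blast
  then have "eventually (\<lambda>y. False) (at_left x0)"
    by (rule eventually_mono) (use node_payoff_le_value[OF k, of i] in \<open>simp add: not_less[symmetric]\<close>)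
  then show False by simp
qed



lemma offer_law_singleton_null:
  assumes k: "k \<in> {1..n}" and x: "x \<le> v"
  shows "q k * measure (offer_law k i) {x} = 0"
proof -
  have "\<forall>k'\<in>{1..n}. q k' * measure (offer_law k' i) ({x} \<inter> {..v}) = 0"
    using eqprob_eq_0[of i x] q_nonneg
    unfolding eqprob_eq_offer_law by (subst sum_nonneg_eq_0_iff[symmetric]) auto
  moreover have "{x} \<inter> {..v} = {x}" using x by auto
  ultimately show ?thesis using k by simp
qed

lemma lowprob_eq_cdf:
  assumes y: "y \<le> v"
  shows "F i y = (\<Sum>k=1..n. q k * cdf (offer_law k i) y)"
  unfolding lowprob_eq_offer_law
proof (intro sum.cong refl)
  fix k assume k: "k \<in> {1..n}"
  then interpret real_distribution "offer_law k i" by (rule real_distribution_offer_law)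
  have "{..<y} \<inter> {..v} = {..<y}" using y by auto
  moreover have "measure (offer_law k i) {..<y} = cdf (offer_law k i) y - measure (offer_law k i) {y}"
    using measure_singleton_eq[of y] by simp
  ultimately show "q k * measure (offer_law k i) ({..<y} \<inter> {..v}) = q k * cdf (offer_law k i) y"
    using offer_law_singleton_null[OF k y, of i] by (simp add: right_diff_distrib)
qed

lemma continuous_on_lowprob: "continuous_on {..v} (F i)"
proof (rule continuous_on_eq)
  show "continuous_on {..v} (\<lambda>y. \<Sum>k=1..n. q k * cdf (offer_law k i) y)"
  proof (intro continuous_at_imp_continuous_on ballI isCont_sum)
    fix x k assume x: "x \<in> {..v}" and k: "k \<in> {1..n}"
    from k interpret real_distribution "offer_law k i" by (rule real_distribution_offer_law)
    show "isCont (\<lambda>y. q k * cdf (offer_law k i) y) x"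
    proof (cases "q k = 0")
      case False
      then have "measure (offer_law k i) {x} = 0" using offer_law_singleton_null[OF k, of x i] x by simp
      then show ?thesis using isCont_cdf by (simp add: isCont_mult)
    qed simp
  qed
qed (use lowprob_eq_cdf in simp)

lemma node_payoff_eq: "x \<le> v \<Longrightarrow> node_payoff k i x = (f k x - c) * binom_below l m (F i x)"
  unfolding node_payoff_def using eqprob_eq_0[of i x] sale_prob_no_ties by simp

lemma binom_below_lowprob_pos: "0 < binom_below l m (F i x)"
  using lowprob_nonneg lowprob_add_eqprob_less_1[of i x] eqprob_eq_0[of i x] binom_below_pos ml by simp

lemma continuous_on_node_payoff:
  assumes k: "k \<in> {1..n}" shows "continuous_on {..v} (node_payoff k i)"
proof (rule continuous_on_eq)
  have "continuous_on {..v} (f k)"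
    using isCont_f[OF k] by (intro continuous_at_imp_continuous_on) auto
  moreover have "continuous_on {..v} (\<lambda>x. binom_below l m (F i x))"
    using continuous_on_compose2[OF continuous_on_binom_below continuous_on_lowprob] by simp
  ultimately show "continuous_on {..v} (\<lambda>x. (f k x - c) * binom_below l m (F i x))"
    by (intro continuous_intros)
qed (use node_payoff_eq in simp)

lemma closed_best_offers: "k \<in> {1..n} \<Longrightarrow> closed (best_offers k i)"
proof -
  assume k: "k \<in> {1..n}"
  have "best_offers k i = {x \<in> {..v}. node_payoff k i x = node_value k i}"
    using best_offers_D[OF k] unfolding best_offers_def by auto
  then show ?thesis
    by (simp only:) (intro continuous_closed_preimage_constant continuous_on_node_payoff[OF k], auto)
qed

lemma bdd_below_best_offers: "k \<in> {1..n} \<Longrightarrow> bdd_below (best_offers k i)"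
  using best_offers_D f_gt_c_iff by (intro bdd_belowI[where m="g k c"]) (auto intro: less_imp_le)

lemma best_offers_higher_le:
  assumes k: "k \<in> {1..n}" "k' \<in> {1..n}" "k < k'"
    and y: "y \<in> best_offers k i" and z: "z \<in> best_offers k' i"
  shows "z \<le> y"
proof (rule ccontr)
  assume "\<not> z \<le> y"
  then have yz: "y < z" by simp
  have y': "y \<le> v" "c < f k y" and z': "z \<le> v" using best_offers_D[OF k(1) y] best_offers_D[OF k(2) z] by auto
  show False
  proof (rule single_crossing[OF k yz y'(2) binom_below_lowprob_pos binom_below_lowprob_pos])
    show "(f k z - c) * binom_below l m (F i z) \<le> (f k y - c) * binom_below l m (F i y)"
      using node_payoff_le_value[OF k(1), of i z] y node_payoff_eq[OF y'(1)] node_payoff_eq[OF z']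
      unfolding best_offers_def by simp
    show "(f k' y - c) * binom_below l m (F i y) \<le> (f k' z - c) * binom_below l m (F i z)"
      using node_payoff_le_value[OF k(2), of i y] z node_payoff_eq[OF y'(1)] node_payoff_eq[OF z']
      unfolding best_offers_def by simp
  qed
qed

lemma lowprob_eq_if_null:
  assumes yz: "y \<le> z" "z \<le> v"
    and null: "\<And>k. k \<in> {1..n} \<Longrightarrow> measure (offer_law k i) {y<..<z} = 0"
  shows "F i z = F i y"
proof (cases "y = z")
  case False
  have same_cdf: "q k * cdf (offer_law k i) z = q k * cdf (offer_law k i) y" if k: "k \<in> {1..n}" for k
  proof -
    from k interpret real_distribution "offer_law k i" by (rule real_distribution_offer_law)
    have "{..z} = ({..y} \<union> {y<..<z}) \<union> {z}" using yz False by auto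
    moreover have "measure (offer_law k i) (({..y} \<union> {y<..<z}) \<union> {z})
        = measure (offer_law k i) ({..y} \<union> {y<..<z}) + measure (offer_law k i) {z}"
      by (rule finite_measure_Union) (use yz False in auto)
    moreover have "measure (offer_law k i) ({..y} \<union> {y<..<z})
        = measure (offer_law k i) {..y} + measure (offer_law k i) {y<..<z}"
      by (rule finite_measure_Union) auto
    ultimately have "cdf (offer_law k i) z
        = cdf (offer_law k i) y + measure (offer_law k i) {y<..<z} + measure (offer_law k i) {z}"
      unfolding cdf_def by simp
    then show ?thesis
      using null[OF k] offer_law_singleton_null[OF k yz(2), of i] by (simp add: distrib_left)
  qed
  have "(\<Sum>k=1..n. q k * cdf (offer_law k i) z) = (\<Sum>k=1..n. q k * cdf (offer_law k i) y)"
    using same_cdf by (rule sum.cong[OF refl])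
  then show ?thesis using lowprob_eq_cdf[of z i] lowprob_eq_cdf[of y i] yz by simp
qed simp


subsection \<open>The thresholds are the tops of the best offers\<close>

abbreviation U :: "nat \<Rightarrow> nat \<Rightarrow> real" where "U s k \<equiv> Uval l m n q c v g t s k"
abbreviation \<gamma> :: "nat \<Rightarrow> nat \<Rightarrow> real" where "\<gamma> s k \<equiv> gam n q t s k"

text \<open>The invariant of the induction over states; \<open>U\<^sub>s\<^sub>,\<^sub>k\<close> satisfies it at every node of \<open>I\<^sub>s\<close>.\<close>
definition frontier :: "'v \<Rightarrow> nat \<Rightarrow> real \<Rightarrow> bool" where
  "frontier i k u \<longleftrightarrow> u \<le> v
     \<and> (\<forall>k'\<in>{1..n}. k' < k \<longrightarrow> measure (offer_law k' i) {..<u} = 0)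
     \<and> (\<forall>k'\<in>{1..n}. k \<le> k' \<longrightarrow> (\<forall>z\<in>best_offers k' i. z \<le> u))"

lemma frontier_D:
  assumes "frontier i k u"
  shows "u \<le> v"
    and "k' \<in> {1..n} \<Longrightarrow> k' < k \<Longrightarrow> measure (offer_law k' i) {..<u} = 0"
    and "k' \<in> {1..n} \<Longrightarrow> k \<le> k' \<Longrightarrow> z \<in> best_offers k' i \<Longrightarrow> z \<le> u"
  using assms unfolding frontier_def by auto

lemma gam_Suc: "k \<in> {1..n} \<Longrightarrow> \<gamma> s k = t s k * q k + \<gamma> s (k+1)"
  unfolding gam_def by (simp add: sum.atLeast_Suc_atMost)

lemma gam_bounds:
  assumes s: "s \<in> {1..d}" and k: "1 \<le> k"
  shows "0 \<le> \<gamma> s k" "\<gamma> s k < 1"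
proof -
  have "\<gamma> s k \<le> (\<Sum>k'=k..n. q k')"
    unfolding gam_def using k t_le_1[OF s] q_nonneg
    by (intro sum_mono) (auto intro!: mult_left_le_one_le simp: t_nonneg[OF s])
  also have "\<dots> \<le> (\<Sum>k'=1..n. q k')"
    by (rule sum_mono2) (use k q_nonneg in auto)
  finally show "\<gamma> s k < 1" using q_pos_sum by simp
  show "0 \<le> \<gamma> s k" unfolding gam_def using k t_nonneg[OF s] q_nonneg by (auto intro!: sum_nonneg)
qed

lemma binom_below_gam_pos: "s \<in> {1..d} \<Longrightarrow> 1 \<le> k \<Longrightarrow> 0 < binom_below l m (\<gamma> s k)"
  using gam_bounds binom_below_pos ml by simp

lemma lowprob_frontier:
  assumes s: "s \<in> {1..d}" and i: "i \<in> Iset s" and k: "1 \<le> k" and fr: "frontier i k u"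
  shows "F i u = \<gamma> s k"
proof -
  have u: "u \<le> v" using frontier_D(1)[OF fr] .
  have "q k' * cdf (offer_law k' i) u = (if k \<le> k' then t s k' * q k' else 0)"
    if k': "k' \<in> {1..n}" for k'
  proof -
    from k' interpret real_distribution "offer_law k' i" by (rule real_distribution_offer_law)
    show ?thesis
    proof (cases "k \<le> k'")
      case False
      then have "measure (offer_law k' i) {..<u} = 0" using frontier_D(2)[OF fr k'] by simp
      then show ?thesis
        using False measure_singleton_eq[of u] offer_law_singleton_null[OF k' u, of i]
        by (simp add: right_diff_distrib)
    next
      case True
      have "measure (offer_law k' i) {u<..v} = 0"
        by (rule offer_law_null[OF k']) (auto dest: frontier_D(3)[OF fr k' True])
      moreover have "measure (offer_law k' i) ({..u} \<union> {u<..v})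
          = cdf (offer_law k' i) u + measure (offer_law k' i) {u<..v}"
        unfolding cdf_def by (rule finite_measure_Union) auto
      moreover have "{..u} \<union> {u<..v} = {..v}" using u by auto
      ultimately show ?thesis using offer_law_atMost[OF k' s i] True by simp
    qed
  qed
  then have "F i u = (\<Sum>k'=1..n. if k \<le> k' then t s k' * q k' else 0)"
    using lowprob_eq_cdf[OF u] by (auto intro: sum.cong)
  also have "\<dots> = (\<Sum>k'\<in>{k'\<in>{1..n}. k \<le> k'}. t s k' * q k')"
    by (subst sum.inter_filter) auto
  also have "{k'\<in>{1..n}. k \<le> k'} = {k..n}" using k by auto
  finally show ?thesis unfolding gam_def .
qed

lemma offer_law_null_above_Sup:
  assumes k: "k \<in> {1..n}" and k': "k' \<in> {1..n}" and fr: "frontier i k u"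
    and ne: "best_offers k i \<noteq> {}"
  shows "measure (offer_law k' i) {Sup (best_offers k i)<..<u} = 0"
proof -
  let ?b = "Sup (best_offers k i)"
  have bdd: "bdd_above (best_offers k i)"
    by (rule bdd_aboveI[where M=u]) (rule frontier_D(3)[OF fr k order_refl])
  have "?b \<in> best_offers k i"
    using closed_contains_Sup[OF ne bdd closed_best_offers[OF k]] .
  show ?thesis
  proof (cases "k' < k")
    case True
    interpret real_distribution "offer_law k' i" using real_distribution_offer_law[OF k'] .
    have "measure (offer_law k' i) {?b<..<u} \<le> measure (offer_law k' i) {..<u}"
      by (rule finite_measure_mono) auto
    then show ?thesis using frontier_D(2)[OF fr k' True] by (simp add: measure_le_0_iff)
  next
    case False
    have "z \<le> ?b" if "z \<in> best_offers k' i" for z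
    proof (cases "k' = k")
      case True
      then show ?thesis using that bdd by (auto intro: cSup_upper)
    next
      case False
      then show ?thesis
        using best_offers_higher_le[OF k k' _ \<open>?b \<in> best_offers k i\<close> that] \<open>\<not> k' < k\<close> by simp
    qed
    then show ?thesis
      using frontier_D(1)[OF fr] by (intro offer_law_null[OF k']) force+
  qed
qed

text \<open>Above the top best offer nothing is offered, so raising the penalty up to \<open>u\<close> costs
  no sale probability.\<close>
lemma frontier_mem_best_offers:
  assumes s: "s \<in> {1..d}" and i: "i \<in> Iset s" and k: "k \<in> {1..n}" and fr: "frontier i k u"
    and ne: "best_offers k i \<noteq> {}"
  shows "u \<in> best_offers k i"
proof (rule ccontr)
  assume notin: "u \<notin> best_offers k i"
  let ?b = "Sup (best_offers k i)"
  have u: "u \<le> v" using frontier_D(1)[OF fr] .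
  have bdd: "bdd_above (best_offers k i)"
    by (rule bdd_aboveI[where M=u]) (rule frontier_D(3)[OF fr k order_refl])
  have b: "?b \<in> best_offers k i"
    using closed_contains_Sup[OF ne bdd closed_best_offers[OF k]] .
  have "?b \<le> u" using ne frontier_D(3)[OF fr k order_refl] by (intro cSup_least)
  then have bu: "?b < u" using b notin by (cases "?b = u") auto
  have "F i u = F i ?b"
    using lowprob_eq_if_null[OF _ u offer_law_null_above_Sup[OF k _ fr ne]] bu by simp
  then have "(f k ?b - c) * binom_below l m (F i ?b) < (f k u - c) * binom_below l m (F i u)"
    using strict_monoD[OF strict_mono_f[OF k] bu] binom_below_lowprob_pos[of i ?b] by simp
  then have "node_payoff k i ?b < node_payoff k i u"
    using node_payoff_eq bu u by simp
  then show False using b node_payoff_le_value[OF k, of i u] unfolding best_offers_def by simp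
qed

lemma frontier_Inf_best_offers:
  assumes k: "k \<in> {1..n}" and fr: "frontier i k u" and ne: "best_offers k i \<noteq> {}"
  shows "Inf (best_offers k i) \<in> best_offers k i" "frontier i (k+1) (Inf (best_offers k i))"
proof -
  let ?a = "Inf (best_offers k i)"
  show a: "?a \<in> best_offers k i"
    by (rule closed_contains_Inf[OF ne bdd_below_best_offers[OF k] closed_best_offers[OF k]])
  have below: "\<And>x. x \<in> best_offers k i \<Longrightarrow> ?a \<le> x"
    using bdd_below_best_offers[OF k] by (auto intro: cInf_lower)
  have au: "?a \<le> u" using frontier_D(3)[OF fr k order_refl a] .
  show "frontier i (k+1) ?a"
    unfolding frontier_def
  proof (intro conjI ballI impI)
    show av: "?a \<le> v" using best_offers_D[OF k a] by simp
    fix k' assume k': "k' \<in> {1..n}" "k' < k + 1"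
    interpret real_distribution "offer_law k' i" using real_distribution_offer_law[OF k'(1)] .
    show "measure (offer_law k' i) {..<?a} = 0"
    proof (cases "k' = k")
      case True
      then show ?thesis using below av by (intro offer_law_null[OF k'(1)]) force+
    next
      case False
      have "measure (offer_law k' i) {..<?a} \<le> measure (offer_law k' i) {..<u}"
        by (rule finite_measure_mono) (use au in auto)
      then show ?thesis using frontier_D(2)[OF fr k'(1)] k' False by (simp add: measure_le_0_iff)
    qed
  next
    fix k' z assume k': "k' \<in> {1..n}" "k + 1 \<le> k'" and z: "z \<in> best_offers k' i"
    show "z \<le> ?a"
      by (rule cInf_greatest[OF ne]) (use best_offers_higher_le[OF k k'(1) _ _ z] k' in auto)
  qed
qed

lemma frontier_Suc_unused:
  assumes s: "s \<in> {1..d}" and i: "i \<in> Iset s" and k: "k \<in> {1..n}"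
    and fr: "frontier i k u" and t0: "t s k = 0"
  shows "frontier i (k+1) u"
  unfolding frontier_def
proof (intro conjI ballI impI)
  show u: "u \<le> v" using frontier_D(1)[OF fr] .
  fix k' assume k': "k' \<in> {1..n}" "k' < k + 1"
  interpret real_distribution "offer_law k' i" using real_distribution_offer_law[OF k'(1)] .
  show "measure (offer_law k' i) {..<u} = 0"
  proof (cases "k' = k")
    case True
    have "measure (offer_law k' i) {..<u} \<le> measure (offer_law k' i) {..v}"
      by (rule finite_measure_mono) (use u in auto)
    then show ?thesis using offer_law_atMost[OF k'(1) s i] True t0 by (simp add: measure_le_0_iff)
  qed (use frontier_D(2)[OF fr k'(1)] k' in simp)
next
  fix k' z assume "k' \<in> {1..n}" "k + 1 \<le> k'" "z \<in> best_offers k' i"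
  then show "z \<le> u" using frontier_D(3)[OF fr, of k' z] by simp
qed

lemma U_Suc:
  assumes "1 \<le> k"
  shows "U s (k+1) = g k ((f k (U s k) - c) * binom_below l m (\<gamma> s k) / binom_below l m (\<gamma> s (k+1)) + c)"
proof -
  obtain k0 where "k = Suc k0" using assms by (cases k) auto
  then show ?thesis unfolding Uval_def using binom_below_eq_Wfun[OF ml] by (simp add: Let_def)
qed

lemma U_Suc_unused:
  assumes s: "s \<in> {1..d}" and k: "k \<in> {1..n}" and t0: "t s k = 0"
  shows "U s (k+1) = U s k"
  using U_Suc[of k s] gam_Suc[OF k, of s] t0 binom_below_gam_pos[OF s, of k] g_f[OF k] k by simp

text \<open>The recursion for \<open>U\<close> says exactly that the top \<open>U\<^sub>s\<^sub>,\<^sub>k\<close> and the bottom of the best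
  offers of state \<open>k\<close> yield the same node payoff.\<close>
lemma U_Suc_used:
  assumes s: "s \<in> {1..d}" and i: "i \<in> Iset s" and k: "k \<in> {1..n}"
    and fr: "frontier i k (U s k)" and ts: "0 < t s k"
  shows "U s (k+1) = Inf (best_offers k i)"
proof -
  let ?a = "Inf (best_offers k i)"
  have ne: "best_offers k i \<noteq> {}" using best_offers_nonempty[OF k s i ts] .
  note a = frontier_Inf_best_offers[OF k fr ne]
  have u_best: "U s k \<in> best_offers k i" using frontier_mem_best_offers[OF s i k fr ne] .
  have "node_payoff k i (U s k) = node_payoff k i ?a"
    using u_best a(1) unfolding best_offers_def by simp
  moreover have "node_payoff k i (U s k) = (f k (U s k) - c) * binom_below l m (\<gamma> s k)"
    using node_payoff_eq best_offers_D[OF k u_best] lowprob_frontier[OF s i _ fr] k by simp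
  moreover have "node_payoff k i ?a = (f k ?a - c) * binom_below l m (\<gamma> s (k+1))"
    using node_payoff_eq best_offers_D[OF k a(1)] lowprob_frontier[OF s i _ a(2)] by simp
  ultimately have "f k ?a = (f k (U s k) - c) * binom_below l m (\<gamma> s k) / binom_below l m (\<gamma> s (k+1)) + c"
    using binom_below_gam_pos[OF s, of "k+1"] by (simp add: field_simps)
  then show ?thesis using U_Suc[of k s] g_f[OF k, of ?a] k by simp
qed

lemma frontier_U:
  assumes s: "s \<in> {1..d}" and i: "i \<in> Iset s"
  shows "k \<in> {1..n} \<Longrightarrow> frontier i k (U s k)"
proof (induction k)
  case (Suc k)
  show ?case
  proof (cases "k = 0")
    case True
    have "frontier i 1 v" unfolding frontier_def using best_offers_D by auto
    then show ?thesis using True by (simp add: Uval_def)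
  next
    case False
    then have k: "k \<in> {1..n}" using Suc by simp
    have fr: "frontier i k (U s k)" using Suc False by simp
    show ?thesis
    proof (cases "0 < t s k")
      case True
      then show ?thesis using U_Suc_used[OF s i k fr True]
          frontier_Inf_best_offers(2)[OF k fr best_offers_nonempty[OF k s i True]] by simp
    next
      case False
      then have "t s k = 0" using t_nonneg[OF s k] by simp
      then show ?thesis using U_Suc_unused[OF s k] frontier_Suc_unused[OF s i k fr] by simp
    qed
  qed
qed simp

lemma U_le_v: "s \<in> {1..d} \<Longrightarrow> k \<in> {1..n} \<Longrightarrow> U s k \<le> v"
  using frontier_D(1)[OF frontier_U] Iset_nonempty by blast

lemma U_best_offer:
  "s \<in> {1..d} \<Longrightarrow> i \<in> Iset s \<Longrightarrow> k \<in> {1..n} \<Longrightarrow> 0 < t s k \<Longrightarrow> U s k \<in> best_offers k i"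
  using frontier_mem_best_offers frontier_U best_offers_nonempty by blast

lemma lowprob_U: "s \<in> {1..d} \<Longrightarrow> i \<in> Iset s \<Longrightarrow> k \<in> {1..n} \<Longrightarrow> F i (U s k) = \<gamma> s k"
  using lowprob_frontier frontier_U by simp

lemma node_value_U:
  assumes s: "s \<in> {1..d}" and i: "i \<in> Iset s" and k: "k \<in> {1..n}" and ts: "0 < t s k"
  shows "node_value k i = (f k (U s k) - c) * binom_below l m (\<gamma> s k)"
  using U_best_offer[OF assms] node_payoff_eq[OF U_le_v[OF s k]] lowprob_U[OF s i k]
  unfolding best_offers_def by simp


subsection \<open>Comparing two used sets\<close>

lemma eq_value_U:
  assumes s: "s \<in> {1..d}" and k: "k \<in> {1..n}" and ts: "0 < t s k"
  shows "eq_value k = real (card (Iset s)) * ((f k (U s k) - c) * binom_below l m (\<gamma> s k))"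
  using set_value_eq_eq_value[OF k s ts] node_value_U[OF s _ k ts] by simp

text \<open>Single crossing between state \<open>k < j\<close>, which prefers its best offer \<open>x\<close> at a node of
  \<open>I\<^sub>r\<close>, and state \<open>j\<close>, for which the set \<open>I\<^sub>r\<close> played at \<open>x\<close> is worth no more than \<open>I\<^sub>s\<close>
  played at \<open>U\<^sub>s\<^sub>,\<^sub>j\<close>.\<close>
lemma U_le_best_offer_lower_state:
  assumes s: "s \<in> {1..d}" and r: "r \<in> {1..d}" and j: "j \<in> {1..n}"
    and ts: "0 < t s j" and tr: "0 < t r j"
    and k: "k \<in> {1..n}" "k < j" and trk: "0 < t r k"
    and i: "i \<in> Iset r" and x: "x \<in> best_offers k i"
  shows "U s j \<le> x"
proof (rule ccontr)
  assume "\<not> U s j \<le> x"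
  then have xU: "x < U s j" by simp
  define Mr where "Mr = real (card (Iset r))"
  define Ms where "Ms = real (card (Iset s))"
  define A where "A = Mr * binom_below l m (F i x)"
  define B where "B = Ms * binom_below l m (\<gamma> s j)"
  have xv: "x \<le> v" and fx: "c < f k x" using best_offers_D[OF k(1) x] by auto
  have A: "0 < A" unfolding A_def Mr_def using card_Iset_pos[OF r] binom_below_lowprob_pos by simp
  have B: "0 < B" unfolding B_def Ms_def using card_Iset_pos[OF s] binom_below_gam_pos[OF s] j by simp
  have payoff_x: "node_payoff k' i x = (f k' x - c) * binom_below l m (F i x)" for k'
    using node_payoff_eq[OF xv] .
  show False
  proof (rule single_crossing[OF k(1) j k(2) xU fx A B])
    have "(f k (U s j) - c) * B = (\<Sum>i'\<in>Iset s. node_payoff k i' (U s j))"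
      unfolding B_def Ms_def
      using node_payoff_eq[OF U_le_v[OF s j]] lowprob_U[OF s _ j] by simp
    also have "\<dots> \<le> eq_value k" by (rule sum_node_payoff_le_eq_value[OF k(1) s])
    also have "\<dots> = (f k x - c) * A"
      using eq_value_U[OF r k(1) trk] node_value_U[OF r i k(1) trk] x payoff_x
      unfolding A_def Mr_def best_offers_def by simp
    finally show "(f k (U s j) - c) * B \<le> (f k x - c) * A" .
    have "(f j x - c) * A = Mr * node_payoff j i x"
      unfolding A_def using payoff_x by simp
    also have "\<dots> \<le> Mr * node_value j i"
      using node_payoff_le_value[OF j] Mr_def by (simp add: mult_left_mono)
    also have "\<dots> = (f j (U s j) - c) * B"
      using eq_value_U[OF r j tr] eq_value_U[OF s j ts] node_value_U[OF r i j tr]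
      unfolding B_def Mr_def Ms_def by (simp add: mult_ac)
    finally show "(f j x - c) * A \<le> (f j (U s j) - c) * B" .
  qed
qed

lemma offer_law_null_between_U:
  assumes s: "s \<in> {1..d}" and r: "r \<in> {1..d}" and j: "j \<in> {1..n}"
    and ts: "0 < t s j" and tr: "0 < t r j"
    and i: "i \<in> Iset r" and k: "k \<in> {1..n}"
  shows "measure (offer_law k i) {U r j<..<U s j} = 0"
proof -
  interpret real_distribution "offer_law k i" using real_distribution_offer_law[OF k] .
  consider "j \<le> k" | "k < j" "t r k = 0" | "k < j" "0 < t r k"
    using t_nonneg[OF r k] by fastforce
  then show ?thesis
  proof cases
    case 1
    then show ?thesis
      using frontier_D(3)[OF frontier_U[OF r i j] k] U_le_v[OF s j]
      by (intro offer_law_null[OF k]) force+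
  next
    case 2
    have "measure (offer_law k i) {U r j<..<U s j} \<le> measure (offer_law k i) {..v}"
      by (rule finite_measure_mono) (use U_le_v[OF s j] in auto)
    then show ?thesis using offer_law_atMost[OF k r i] 2 by (simp add: measure_le_0_iff)
  next
    case 3
    then show ?thesis
      using U_le_best_offer_lower_state[OF s r j ts tr k _ _ i] U_le_v[OF s j]
      by (intro offer_law_null[OF k]) force+
  qed
qed

text \<open>An offer at \<open>U\<^sub>s\<^sub>,\<^sub>j\<close> on a node of \<open>I\<^sub>r\<close> would sell as often as one at \<open>U\<^sub>r\<^sub>,\<^sub>j\<close>.\<close>
lemma U_le_U:
  assumes s: "s \<in> {1..d}" and r: "r \<in> {1..d}" and j: "j \<in> {1..n}"
    and ts: "0 < t s j" and tr: "0 < t r j"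
  shows "U s j \<le> U r j"
proof (rule ccontr)
  assume "\<not> U s j \<le> U r j"
  then have lt: "U r j < U s j" by simp
  obtain i where i: "i \<in> Iset r" using Iset_nonempty[OF r] by auto
  have "F i (U s j) = F i (U r j)"
    using lowprob_eq_if_null[OF _ U_le_v[OF s j] offer_law_null_between_U[OF s r j ts tr i]] lt
    by simp
  then have "node_payoff j i (U s j) = (f j (U s j) - c) * binom_below l m (\<gamma> r j)"
    using node_payoff_eq[OF U_le_v[OF s j]] lowprob_U[OF r i j] by simp
  also have "\<dots> > (f j (U r j) - c) * binom_below l m (\<gamma> r j)"
    using strict_monoD[OF strict_mono_f[OF j] lt] binom_below_gam_pos[OF r] j by simp
  also have "(f j (U r j) - c) * binom_below l m (\<gamma> r j) = node_value j i"
    using node_value_U[OF r i j tr] by simp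
  finally show False using node_payoff_le_value[OF j, of i "U s j"] by simp
qed

end

theorem lemma3:
  fixes E :: "'v::finite \<Rightarrow> 'v \<Rightarrow> bool"
    and l m n d :: nat
    and q :: "nat \<Rightarrow> real"
    and c v :: real
    and g :: "nat \<Rightarrow> real \<Rightarrow> real"
    and Iset :: "nat \<Rightarrow> 'v set"
    and \<sigma> :: "nat \<Rightarrow> ('v set \<times> ('v \<Rightarrow> real)) measure"
    and t :: "nat \<Rightarrow> nat \<Rightarrow> real"
    and s r j :: nat
  assumes E_sym: "\<And>a b. E a b \<Longrightarrow> E b a"
    and E_irrefl: "\<And>a. \<not> E a a"
    and ml: "1 \<le> m" "m < l"
    and q_nonneg: "\<And>k. k \<le> n \<Longrightarrow> 0 \<le> q k"
    and q_sum: "(\<Sum>k=0..n. q k) = 1"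
    and q_pos_sum: "(\<Sum>k=1..n. q k) < 1"
    and g_cont: "\<And>k. k \<in> {1..n} \<Longrightarrow> continuous_on UNIV (g k)"
    and g_mono: "\<And>k. k \<in> {1..n} \<Longrightarrow> strict_mono (g k)"
    and g_bij: "\<And>k. k \<in> {1..n} \<Longrightarrow> bij (g k)"
    and g_order: "\<And>i k p. i \<in> {1..n} \<Longrightarrow> k \<in> {1..n} \<Longrightarrow> k < i \<Longrightarrow> g i p < g k p"
    and ratio: "\<And>i k x y. i \<in> {1..n} \<Longrightarrow> k \<in> {1..n} \<Longrightarrow> i < k \<Longrightarrow> x > y \<Longrightarrow> y > g i c \<Longrightarrow>
        (inv (g i) y - c) / (inv (g k) y - c) < (inv (g i) x - c) / (inv (g k) x - c)"
    and f1v: "inv (g 1) v > c"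
    and mv: "mean_valid E d Iset"
    and NE: "symNE l m n q c v g E \<sigma>"
    and supp: "\<And>k. k \<in> {1..n} \<Longrightarrow> AE a in \<sigma> k. fst a \<in> Iset ` {1..d}"
    and t_def: "\<And>s' k. s' \<in> {1..d} \<Longrightarrow> k \<in> {1..n} \<Longrightarrow> t s' k = measure (\<sigma> k) {a. fst a = Iset s'}"
    and s_in: "s \<in> {1..d}" and r_in: "r \<in> {1..d}" and j_in: "j \<in> {1..n}"
    and ts: "t s j > 0" and tr: "t r j > 0"
  shows "Uval l m n q c v g t s j = Uval l m n q c v g t r j"
proof -
  interpret sym_equilibrium E l m n d q c v g Iset \<sigma> t
    by unfold_locales (fact E_irrefl ml q_nonneg q_pos_sum g_cont g_mono g_bij g_order ratio f1v mv NE supp t_def)+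
  show ?thesis using U_le_U[OF s_in r_in j_in ts tr] U_le_U[OF r_in s_in j_in tr ts] by simp
qed

end
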